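(* The class of minus-algebras is a proper quasivariety: it is not closed under homomorphic images, so it cannot be axiomatised by identities alone.
   Context: A minus-algebra is an algebra $(A,\circ,-)$ with two binary operations satisfying: $x\circ y=y-(y-x)$; $(A,\circ)$ is a right normal band (a semigroup with $x\circ x=x$ and $(x\circ y)\circ z=(y\circ x)\circ z$); there is an element $0$ with $x-x=0$ for all $x$; $x\circ0=0\circ x=0$; $(x-y)\circ x=x-y$; $(x-y)\circ y=0$; $(x-y)\circ z=(x\circ z)-y$; and the quasi-identity $s-x=t-x\ \&\ x\circ s=x\circ t\Rightarrow s=t$. *)

theory Defs
  imports Main
begin

definition alg_closed :: "'a set \<Rightarrow> ('a \<Rightarrow> 'a \<Rightarrow> 'a) \<Rightarrow> ('a \<Rightarrow> 'a \<Rightarrow> 'a) \<Rightarrow> bool" where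
  "alg_closed A c m \<longleftrightarrow> (\<forall>x\<in>A. \<forall>y\<in>A. c x y \<in> A \<and> m x y \<in> A)"

definition minus_algebra :: "'a set \<Rightarrow> ('a \<Rightarrow> 'a \<Rightarrow> 'a) \<Rightarrow> ('a \<Rightarrow> 'a \<Rightarrow> 'a) \<Rightarrow> bool" where
  "minus_algebra A c m \<longleftrightarrow>
     alg_closed A c m \<and>
     (\<forall>x\<in>A. \<forall>y\<in>A. c x y = m y (m y x)) \<and>
     (\<forall>x\<in>A. \<forall>y\<in>A. \<forall>z\<in>A. c (c x y) z = c x (c y z)) \<and>
     (\<forall>x\<in>A. c x x = x) \<and>
     (\<forall>x\<in>A. \<forall>y\<in>A. \<forall>z\<in>A. c (c x y) z = c (c y x) z) \<and>
     (\<exists>e\<in>A.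
        (\<forall>x\<in>A. m x x = e) \<and>
        (\<forall>x\<in>A. c x e = e \<and> c e x = e) \<and>
        (\<forall>x\<in>A. \<forall>y\<in>A. c (m x y) x = m x y) \<and>
        (\<forall>x\<in>A. \<forall>y\<in>A. c (m x y) y = e) \<and>
        (\<forall>x\<in>A. \<forall>y\<in>A. \<forall>z\<in>A. c (m x y) z = m (c x z) y)) \<and>
     (\<forall>s\<in>A. \<forall>t\<in>A. \<forall>x\<in>A. m s x = m t x \<and> c x s = c x t \<longrightarrow> s = t)"

definition alg_hom :: "('a \<Rightarrow> 'b) \<Rightarrow> 'a set \<Rightarrow> ('a \<Rightarrow> 'a \<Rightarrow> 'a) \<Rightarrow> ('a \<Rightarrow> 'a \<Rightarrow> 'a)
                       \<Rightarrow> 'b set \<Rightarrow> ('b \<Rightarrow> 'b \<Rightarrow> 'b) \<Rightarrow> ('b \<Rightarrow> 'b \<Rightarrow> 'b) \<Rightarrow> bool" where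
  "alg_hom h A cA mA B cB mB \<longleftrightarrow>
     (\<forall>x\<in>A. h x \<in> B) \<and>
     (\<forall>x\<in>A. \<forall>y\<in>A. h (cA x y) = cB (h x) (h y) \<and> h (mA x y) = mB (h x) (h y))"

end

theory Submission
  imports Defs
begin

text \<open>Minus-algebras arise as algebras of partial maps, with \<open>f - g\<close> the restriction of \<open>f\<close>
to the complement of the domain of \<open>g\<close>. Take the six partial maps on \<open>{a, b}\<close> built from
\<open>a \<mapsto> p\<close>, \<open>a \<mapsto> q\<close> and \<open>b \<mapsto> r\<close>, and collapse the two maps with domain \<open>{a}\<close>. This is a
congruence, but in the quotient the maps \<open>{a \<mapsto> p, b \<mapsto> r}\<close> and \<open>{a \<mapsto> q, b \<mapsto> r}\<close> still
differ while having the same restriction to \<open>{a}\<close> and to \<open>{b}\<close>: the quotient violates the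
quasi-identity.\<close>

definition circ_of :: "('a \<Rightarrow> 'a \<Rightarrow> 'a) \<Rightarrow> 'a \<Rightarrow> 'a \<Rightarrow> 'a" where
  "circ_of m x y = m y (m y x)"

definition respects_ker :: "('a \<Rightarrow> 'b) \<Rightarrow> 'a set \<Rightarrow> ('a \<Rightarrow> 'a \<Rightarrow> 'a) \<Rightarrow> bool" where
  "respects_ker h A f \<longleftrightarrow>
     (\<forall>x\<in>A. \<forall>x'\<in>A. \<forall>y\<in>A. \<forall>y'\<in>A. h x = h x' \<longrightarrow> h y = h y' \<longrightarrow> h (f x y) = h (f x' y'))"

definition quotient_op :: "('a \<Rightarrow> 'b) \<Rightarrow> 'a set \<Rightarrow> ('a \<Rightarrow> 'a \<Rightarrow> 'a) \<Rightarrow> 'b \<Rightarrow> 'b \<Rightarrow> 'b" where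
  "quotient_op h A f u v = h (f (inv_into A h u) (inv_into A h v))"

lemma minus_algebra_cancel:
  assumes "minus_algebra A c m" "s \<in> A" "t \<in> A" "x \<in> A"
    and "m s x = m t x" "c x s = c x t"
  shows "s = t"
  using assms unfolding minus_algebra_def by blast

lemma respects_ker_circ_of:
  assumes "alg_closed A c m" "respects_ker h A m"
  shows "respects_ker h A (circ_of m)"
  using assms unfolding respects_ker_def alg_closed_def circ_of_def by metis

lemma quotient_op_image:
  assumes "respects_ker h A f" "x \<in> A" "y \<in> A"
  shows "quotient_op h A f (h x) (h y) = h (f x y)"
proof -
  have "inv_into A h (h x) \<in> A" "h (inv_into A h (h x)) = h x"
    "inv_into A h (h y) \<in> A" "h (inv_into A h (h y)) = h y"
    using assms(2,3) by (simp_all add: inv_into_into f_inv_into_f)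
  with assms show ?thesis
    unfolding quotient_op_def respects_ker_def by metis
qed

lemma alg_closed_quotient:
  assumes "alg_closed A c m"
  shows "alg_closed (h ` A) (quotient_op h A c) (quotient_op h A m)"
  using assms unfolding alg_closed_def quotient_op_def by (blast intro: inv_into_into)

lemma alg_hom_quotient:
  assumes "respects_ker h A c" "respects_ker h A m"
  shows "alg_hom h A c m (h ` A) (quotient_op h A c) (quotient_op h A m)"
  using assms unfolding alg_hom_def by (simp add: quotient_op_image)

lemma not_minus_algebra_if_hom_separates:
  assumes "alg_hom h A c m B c' m'" "s \<in> A" "t \<in> A" "x \<in> A"
    and "h (m s x) = h (m t x)" "h (c x s) = h (c x t)" "h s \<noteq> h t"
  shows "\<not> minus_algebra B c' m'"
proof
  assume "minus_algebra B c' m'"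
  moreover have "h s \<in> B" "h t \<in> B" "h x \<in> B"
    using assms(1-4) unfolding alg_hom_def by blast+
  moreover have "m' (h s) (h x) = m' (h t) (h x)" "c' (h x) (h s) = c' (h x) (h t)"
    using assms unfolding alg_hom_def by metis+
  ultimately have "h s = h t" by (rule minus_algebra_cancel)
  with assms(7) show False ..
qed

text \<open>Codes of the partial maps: \<open>0 = \<emptyset>\<close>, \<open>1 = {a \<mapsto> p}\<close>, \<open>2 = {a \<mapsto> q}\<close>, \<open>3 = {b \<mapsto> r}\<close>,
\<open>4 = 1 \<union> 3\<close>, \<open>5 = 2 \<union> 3\<close>; the entry in row \<open>x\<close>, column \<open>y\<close> is \<open>x - y\<close>.\<close>

definition pmap_minus :: "nat \<Rightarrow> nat \<Rightarrow> nat" where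
  "pmap_minus x y = [[0, 0, 0, 0, 0, 0], [1, 0, 0, 1, 0, 0], [2, 0, 0, 2, 0, 0],
                     [3, 3, 3, 0, 0, 0], [4, 3, 3, 1, 0, 0], [5, 3, 3, 2, 0, 0]] ! x ! y"

definition merge_codes :: "nat \<Rightarrow> nat" where
  "merge_codes x = (if x = 2 then 1 else x)"

lemma minus_algebra_pmap: "minus_algebra {0, 1, 2, 3, 4, 5} (circ_of pmap_minus) pmap_minus"
  unfolding minus_algebra_def alg_closed_def circ_of_def
  by (intro conjI) (simp_all add: pmap_minus_def)

lemma respects_ker_merge_codes: "respects_ker merge_codes {0, 1, 2, 3, 4, 5} pmap_minus"
  unfolding respects_ker_def by (simp add: merge_codes_def pmap_minus_def)

theorem proposition5p2:
  shows "\<exists>(A::nat set) cA mA (B::nat set) cB mB h.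
           minus_algebra A cA mA \<and> alg_closed B cB mB \<and>
           alg_hom h A cA mA B cB mB \<and> h ` A = B \<and>
           \<not> minus_algebra B cB mB"
proof -
  let ?A = "{0, 1, 2, 3, 4, 5} :: nat set"
  let ?c = "circ_of pmap_minus"
  let ?h = merge_codes
  have A: "minus_algebra ?A ?c pmap_minus"
    by (rule minus_algebra_pmap)
  then have closed: "alg_closed ?A ?c pmap_minus"
    unfolding minus_algebra_def by blast
  have ker_c: "respects_ker ?h ?A ?c"
    using closed respects_ker_merge_codes by (rule respects_ker_circ_of)
  have hom: "alg_hom ?h ?A ?c pmap_minus
      (?h ` ?A) (quotient_op ?h ?A ?c) (quotient_op ?h ?A pmap_minus)"
    using ker_c respects_ker_merge_codes by (rule alg_hom_quotient)
  have "\<not> minus_algebra (?h ` ?A) (quotient_op ?h ?A ?c) (quotient_op ?h ?A pmap_minus)"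
    by (rule not_minus_algebra_if_hom_separates[OF hom, of 4 5 1])
      (simp_all add: merge_codes_def pmap_minus_def circ_of_def)
  with A alg_closed_quotient[OF closed] hom show ?thesis
    by blast
qed

end
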